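(* For all $n,k\in\mathbb{N}$, $T(n,\omega\cdot k)\ge k^{n}$. Consequently $T(n,\omega\cdot k)=k^{n}$.
   Context: $\mathbb{N}=\{0,1,2,\dots\}$ and $[c]=\{1,\dots,c\}$; the convention $0^0=1$ is used. Each ordinal $\alpha$ is identified with the linearly ordered set of ordinals $\beta<\alpha$; $\omega\cdot k$ is the concatenation of $k$ copies of $\omega$ (elements $\omega\cdot b+a$ with $0\le b<k$, $a\in\mathbb{N}$). $\binom{S}{n}$ is the set of $n$-element subsets of $S$. $\approx$ denotes order-equivalence (existence of an order-preserving bijection). For a linearly ordered set $S$ and $n\in\mathbb{N}$, $T(n,S)$ is the least $t\in\mathbb{N}$ such that for every $c\ge 1$ and every coloring $\mathrm{COL}:\binom{S}{n}\to[c]$ there exists $S'\subseteq S$ with $S'\approx S$ and $|\mathrm{COL}(\binom{S'}{n})|\le t$; if no such $t$ exists, $T(n,S)=\infty$. *)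

theory Defs
  imports Main "HOL-Library.Extended_Nat"
begin

definition nsubsets :: "'a set \<Rightarrow> nat \<Rightarrow> 'a set set" where
  "nsubsets S n = {X. X \<subseteq> S \<and> finite X \<and> card X = n}"

definition order_equiv :: "('a \<Rightarrow> 'a \<Rightarrow> bool) \<Rightarrow> 'a set \<Rightarrow> 'a set \<Rightarrow> bool" where
  "order_equiv lt A B \<longleftrightarrow>
     (\<exists>f. bij_betw f A B \<and> (\<forall>x\<in>A. \<forall>y\<in>A. lt x y \<longleftrightarrow> lt (f x) (f y)))"

definition T_bound :: "nat \<Rightarrow> 'a set \<Rightarrow> ('a \<Rightarrow> 'a \<Rightarrow> bool) \<Rightarrow> nat \<Rightarrow> bool" where
  "T_bound n S lt t \<longleftrightarrow>
     (\<forall>c::nat. c \<ge> 1 \<longrightarrow> (\<forall>COL :: 'a set \<Rightarrow> nat. (\<forall>X\<in>nsubsets S n. COL X \<in> {1..c}) \<longrightarrow>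
        (\<exists>S'. S' \<subseteq> S \<and> order_equiv lt S' S \<and> card (COL ` nsubsets S' n) \<le> t)))"

definition T :: "nat \<Rightarrow> 'a set \<Rightarrow> ('a \<Rightarrow> 'a \<Rightarrow> bool) \<Rightarrow> enat" where
  "T n S lt = (if \<exists>t. T_bound n S lt t then enat (LEAST t. T_bound n S lt t) else \<infinity>)"

text \<open>The ordinal omega * k: element omega*b + a is represented as the pair (b, a), b < k,
  ordered lexicographically.\<close>
definition omega_times :: "nat \<Rightarrow> (nat \<times> nat) set" where
  "omega_times k = {(b, a). b < k}"

definition omega_less :: "nat \<times> nat \<Rightarrow> nat \<times> nat \<Rightarrow> bool" where
  "omega_less p q \<longleftrightarrow> fst p < fst q \<or> (fst p = fst q \<and> snd p < snd q)"

end

theory Submission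
  imports Defs "HOL-Library.Ramsey" "HOL-Library.Countable"
begin

text \<open>Sort the elements \<open>\<omega>\<cdot>b + a\<close> of an \<open>n\<close>-subset of \<open>\<omega>\<cdot>k\<close> by their positions \<open>a\<close> and read off
  their blocks \<open>b\<close>: this block pattern takes \<open>k ^ n\<close> values.

  Upper bound: for a colouring \<open>COL\<close> and each pattern \<open>s\<close>, colour the \<open>n\<close>-sets \<open>Y\<close> of positions
  by \<open>COL (zip s Y)\<close>. Ramsey's theorem, applied to these finitely many colourings at once, gives
  an infinite set \<open>H\<close> of positions homogeneous for all of them. Interleaving the \<open>k\<close> blocks
  along \<open>H\<close> gives a copy of \<open>\<omega>\<cdot>k\<close> on which the colour of a set depends only on its pattern.

  Lower bound: colour each set by its pattern. An order embedding of \<open>\<omega>\<cdot>k\<close> into itself sends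
  each block cofinally into the same block, so every copy of \<open>\<omega>\<cdot>k\<close> inside \<open>\<omega>\<cdot>k\<close> has
  arbitrarily large positions in every block and realises all \<open>k ^ n\<close> patterns.\<close>

lemma order_equiv_sym:
  assumes "order_equiv lt A B"
  shows "order_equiv lt B A"
proof -
  obtain f where f: "bij_betw f A B" and iff: "\<forall>x\<in>A. \<forall>y\<in>A. lt x y \<longleftrightarrow> lt (f x) (f y)"
    using assms unfolding order_equiv_def by blast
  let ?g = "inv_into A f"
  have "bij_betw ?g B A"
    using f by (rule bij_betw_inv_into)
  moreover have "lt x y \<longleftrightarrow> lt (?g x) (?g y)" if "x \<in> B" "y \<in> B" for x y
  proof -
    have "?g x \<in> A" "?g y \<in> A"
      using that f by (auto simp: bij_betw_def inv_into_into)
    moreover have "f (?g x) = x" "f (?g y) = y"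
      using that f by (simp_all add: bij_betw_inv_into_right)
    ultimately show ?thesis
      using iff by metis
  qed
  ultimately show ?thesis
    unfolding order_equiv_def by blast
qed

lemma T_eqI:
  assumes "T_bound n S lt t" and "\<And>t'. T_bound n S lt t' \<Longrightarrow> t \<le> t'"
  shows "T n S lt = enat t"
proof -
  have "(LEAST t. T_bound n S lt t) = t"
    using assms by (rule Least_equality)
  then show ?thesis
    unfolding T_def using assms(1) by auto
qed

lemma T_bound_finite_colouring:
  fixes COL :: "'a set \<Rightarrow> nat"
  assumes "T_bound n S lt t" and "finite (COL ` nsubsets S n)"
  obtains S' where "S' \<subseteq> S" "order_equiv lt S' S" "card (COL ` nsubsets S' n) \<le> t"
proof -
  define c where "c = Suc (Max (insert 0 (COL ` nsubsets S n)))"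
  have c: "1 \<le> c"
    by (simp add: c_def)
  have colours: "Suc (COL X) \<in> {1..c}" if "X \<in> nsubsets S n" for X
    using assms(2) that unfolding c_def by (simp add: Max_ge)
  obtain S' where S': "S' \<subseteq> S" "order_equiv lt S' S"
      "card ((\<lambda>X. Suc (COL X)) ` nsubsets S' n) \<le> t"
    using assms(1)[unfolded T_bound_def, rule_format, of c "\<lambda>X. Suc (COL X)", OF c colours]
    by blast
  have "card ((\<lambda>X. Suc (COL X)) ` nsubsets S' n) = card (COL ` nsubsets S' n)"
    using card_image[of Suc "COL ` nsubsets S' n"] by (simp add: image_image)
  with S' show thesis
    using that by simp
qed

lemma Ramsey_nsets_finite_family:
  fixes f :: "'b \<Rightarrow> 'a set \<Rightarrow> nat"
  assumes "finite L" "infinite Z" "\<And>s. s \<in> L \<Longrightarrow> f s ` [Z]\<^bsup>r\<^esup> \<subseteq> {..<c}"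
  obtains Y t where "Y \<subseteq> Z" "infinite Y" "\<forall>s\<in>L. f s ` [Y]\<^bsup>r\<^esup> \<subseteq> {t s}"
proof -
  have "\<exists>Y\<subseteq>Z. infinite Y \<and> (\<forall>s\<in>L'. \<exists>t. f s ` [Y]\<^bsup>r\<^esup> \<subseteq> {t})" if "L' \<subseteq> L" for L'
    using finite_subset[OF that assms(1)] that
  proof (induction L' rule: finite_induct)
    case empty
    then show ?case using assms(2) by blast
  next
    case (insert s0 L')
    then have "L' \<subseteq> L" "s0 \<in> L"
      by auto
    then obtain Y where Y: "Y \<subseteq> Z" "infinite Y" "\<forall>s\<in>L'. \<exists>t. f s ` [Y]\<^bsup>r\<^esup> \<subseteq> {t}"
      using insert.IH by blast
    have "f s0 ` [Y]\<^bsup>r\<^esup> \<subseteq> {..<c}"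
      using assms(3)[OF \<open>s0 \<in> L\<close>] image_mono[OF nsets_mono[OF Y(1)]] by (rule order_trans[rotated])
    then obtain Y' t0 where Y': "Y' \<subseteq> Y" "infinite Y'" "t0 < c" "f s0 ` [Y']\<^bsup>r\<^esup> \<subseteq> {t0}"
      by (rule Ramsey_nsets[OF Y(2)])
    have "\<exists>t. f s ` [Y']\<^bsup>r\<^esup> \<subseteq> {t}" if "s \<in> L'" for s
    proof -
      obtain t where "f s ` [Y]\<^bsup>r\<^esup> \<subseteq> {t}"
        using Y(3) \<open>s \<in> L'\<close> by blast
      then show ?thesis
        using nsets_mono[OF Y'(1)] by (meson image_mono order_trans)
    qed
    then have "\<forall>s\<in>insert s0 L'. \<exists>t. f s ` [Y']\<^bsup>r\<^esup> \<subseteq> {t}"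
      using Y'(4) by blast
    moreover have "Y' \<subseteq> Z"
      using Y(1) Y'(1) by (rule order_trans[rotated])
    ultimately show ?case
      using Y'(2) by blast
  qed
  from this[OF order_refl] obtain Y
    where Y: "Y \<subseteq> Z" "infinite Y" and hom: "\<forall>s\<in>L. \<exists>t. f s ` [Y]\<^bsup>r\<^esup> \<subseteq> {t}"
    by blast
  obtain t where "\<forall>s\<in>L. f s ` [Y]\<^bsup>r\<^esup> \<subseteq> {t s}"
    using bchoice[OF hom] by blast
  then show thesis
    by (rule that[OF Y])
qed

lemma increasing_below_eq_id:
  fixes \<beta> :: "nat \<Rightarrow> nat"
  assumes step: "\<And>i. Suc i < k \<Longrightarrow> \<beta> i < \<beta> (Suc i)" and bound: "\<And>i. i < k \<Longrightarrow> \<beta> i < k"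
    and "j < k"
  shows "\<beta> j = j"
proof (rule antisym)
  show "\<beta> j \<le> j"
    using \<open>j < k\<close>
  proof (induction "k - Suc j" arbitrary: j)
    case 0
    then show ?case using bound[of j] by simp
  next
    case (Suc m)
    then have "Suc j < k" "\<beta> (Suc j) \<le> Suc j"
      using Suc.hyps(1)[of "Suc j"] by auto
    then show ?case
      using step[of j] by simp
  qed
  show "j \<le> \<beta> j"
    using \<open>j < k\<close>
  proof (induction j)
    case (Suc j)
    then show ?case using step[of j] by simp
  qed simp
qed

lemma mem_omega_times_iff: "x \<in> omega_times k \<longleftrightarrow> fst x < k"
  by (cases x) (simp add: omega_times_def)

text \<open>The pair \<open>(b, a)\<close> is \<open>\<omega>\<cdot>b + a\<close>, so this lists blocks by increasing position \<open>a\<close>.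
  When two elements share a position, \<open>SOME\<close> keeps only one of their blocks.\<close>
definition block_pattern :: "(nat \<times> nat) set \<Rightarrow> nat list" where
  "block_pattern X = map (\<lambda>a. SOME b. (b, a) \<in> X) (sorted_list_of_set (snd ` X))"

definition block_patterns :: "nat \<Rightarrow> nat \<Rightarrow> nat list set" where
  "block_patterns k n = {s. set s \<subseteq> {..<k} \<and> length s = n}"

lemma finite_block_patterns: "finite (block_patterns k n)"
  unfolding block_patterns_def using finite_lists_length_eq[of "{..<k}" n] by simp

lemma card_block_patterns: "card (block_patterns k n) = k ^ n"
  unfolding block_patterns_def using card_lists_length_eq[of "{..<k}" n] by simp

lemma set_block_pattern_subset:
  assumes "X \<subseteq> omega_times k"
  shows "set (block_pattern X) \<subseteq> {..<k}"
proof
  fix b assume "b \<in> set (block_pattern X)"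
  then obtain a where a: "a \<in> set (sorted_list_of_set (snd ` X))" "b = (SOME b. (b, a) \<in> X)"
    unfolding block_pattern_def by auto
  then have "a \<in> snd ` X"
    by (cases "finite (snd ` X)") auto
  then have "(b, a) \<in> X"
    unfolding a(2) by (auto intro: someI)
  then show "b \<in> {..<k}"
    using assms unfolding omega_times_def by auto
qed

lemma length_block_pattern: "length (block_pattern X) = card (snd ` X)"
  by (simp add: block_pattern_def)

lemma block_pattern_zip:
  assumes "sorted_wrt (<) ys" and "length s = length ys"
  shows "block_pattern (set (zip s ys)) = s"
proof -
  let ?X = "set (zip s ys)"
  have "distinct ys"
    using assms(1) by (simp add: strict_sorted_iff)
  have "snd ` ?X = set ys"
    using assms(2) by (metis map_snd_zip set_map)
  then have "sorted_list_of_set (snd ` ?X) = ys"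
    using assms(1) by (simp add: sorted_list_of_set_sort_remdups strict_sorted_iff distinct_remdups_id sorted_sort_id)
  moreover have "(SOME b. (b, ys ! i) \<in> ?X) = s ! i" if "i < length ys" for i
  proof (rule some_equality)
    show "(s ! i, ys ! i) \<in> ?X"
      using that assms(2) by (metis in_set_zip fst_conv snd_conv)
    fix b assume "(b, ys ! i) \<in> ?X"
    then obtain m where "m < length ys" "s ! m = b" "ys ! m = ys ! i"
      by (auto simp: in_set_zip)
    with \<open>distinct ys\<close> that show "b = s ! i"
      using nth_eq_iff_index_eq by metis
  qed
  ultimately show ?thesis
    using assms(2) unfolding block_pattern_def by (simp add: list_eq_iff_nth_eq)
qed

lemma set_zip_block_pattern:
  assumes "finite X" and "inj_on snd X"
  shows "set (zip (block_pattern X) (sorted_list_of_set (snd ` X))) = X"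
proof -
  have block: "(SOME b. (b, snd x) \<in> X) = fst x" if "x \<in> X" for x
  proof (rule some_equality)
    show "(fst x, snd x) \<in> X"
      using that by simp
    fix b assume "(b, snd x) \<in> X"
    then have "(b, snd x) = x"
      using inj_onD[OF assms(2), of "(b, snd x)" x] that by simp
    then show "b = fst x"
      by (metis fst_conv)
  qed
  have "set (zip (block_pattern X) (sorted_list_of_set (snd ` X)))
      = (\<lambda>a. (SOME b. (b, a) \<in> X, a)) ` snd ` X"
    using assms(1) by (simp add: block_pattern_def zip_map1 zip_same_conv_map image_image)
  also have "\<dots> = (\<lambda>x. (SOME b. (b, snd x) \<in> X, snd x)) ` X"
    by (simp add: image_image)
  also have "\<dots> = (\<lambda>x. x) ` X"
    by (intro image_cong refl) (simp add: block)
  finally show ?thesis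
    by simp
qed

lemma set_zip_in_nsubsets:
  assumes "distinct ys" "length s = length ys" "set (zip s ys) \<subseteq> S"
  shows "set (zip s ys) \<in> nsubsets S (length ys)"
  using assms distinct_zipI2[OF assms(1), of s] unfolding nsubsets_def by (simp add: distinct_card)

lemma set_zip_pattern_in_nsubsets:
  assumes "s \<in> block_patterns k n" and "finite Y" and "card Y = n"
  shows "set (zip s (sorted_list_of_set Y)) \<in> nsubsets (omega_times k) n"
proof -
  have "set (zip s (sorted_list_of_set Y)) \<subseteq> omega_times k"
    using assms(1) by (auto simp: block_patterns_def mem_omega_times_iff dest: set_zip_leftD)
  then show ?thesis
    using set_zip_in_nsubsets[of "sorted_list_of_set Y" s] assms by (simp add: block_patterns_def)
qed

lemma block_pattern_decomposition:
  assumes "S \<subseteq> omega_times k" and "inj_on snd S" and "X \<in> nsubsets S n"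
  shows "block_pattern X \<in> block_patterns k n" and "snd ` X \<in> [snd ` S]\<^bsup>n\<^esup>"
    and "set (zip (block_pattern X) (sorted_list_of_set (snd ` X))) = X"
proof -
  have X: "finite X" "X \<subseteq> S" "card X = n"
    using assms(3) by (auto simp: nsubsets_def)
  have inj: "inj_on snd X"
    using assms(2) X(2) by (rule inj_on_subset)
  show "block_pattern X \<in> block_patterns k n"
    using set_block_pattern_subset[of X k] X assms(1) inj
    by (auto simp: block_patterns_def length_block_pattern card_image)
  show "snd ` X \<in> [snd ` S]\<^bsup>n\<^esup>"
    using X inj by (auto simp: nsets_def card_image)
  show "set (zip (block_pattern X) (sorted_list_of_set (snd ` X))) = X"
    using X(1) inj by (rule set_zip_block_pattern)
qed

lemma finite_block_pattern_image: "finite (block_pattern ` nsubsets (omega_times k) n)"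
proof (rule finite_subset)
  show "block_pattern ` nsubsets (omega_times k) n \<subseteq> {s. set s \<subseteq> {..<k} \<and> length s \<le> n}"
  proof clarify
    fix X assume "X \<in> nsubsets (omega_times k) n"
    then have "X \<subseteq> omega_times k" "finite X" "card X = n"
      by (simp_all add: nsubsets_def)
    then show "set (block_pattern X) \<subseteq> {..<k} \<and> length (block_pattern X) \<le> n"
      using set_block_pattern_subset card_image_le[of X snd] by (simp add: length_block_pattern)
  qed
qed (simp add: finite_lists_length_le)

lemma sorted_positions_in_blocks:
  fixes S :: "(nat \<times> nat) set"
  assumes unbounded: "\<And>j N. j < k \<Longrightarrow> \<exists>a\<ge>N. (j, a) \<in> S"
    and "set s \<subseteq> {..<k}"
  shows "\<exists>ys. length ys = length s \<and> sorted_wrt (<) ys \<and> (\<forall>y\<in>set ys. N \<le> y)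
           \<and> set (zip s ys) \<subseteq> S"
  using assms(2)
proof (induction s arbitrary: N)
  case Nil
  then show ?case by simp
next
  case (Cons b s)
  then have "b < k"
    by simp
  then obtain a where a: "N \<le> a" "(b, a) \<in> S"
    using unbounded by blast
  obtain ys where ys: "length ys = length s" "sorted_wrt (<) ys" "\<forall>y\<in>set ys. Suc a \<le> y"
      "set (zip s ys) \<subseteq> S"
    using Cons.IH[of "Suc a"] Cons.prems by auto
  show ?case
    by (rule exI[of _ "a # ys"]) (use a ys in auto)
qed

lemma block_patterns_subset_image:
  fixes S :: "(nat \<times> nat) set"
  assumes "\<And>j N. j < k \<Longrightarrow> \<exists>a\<ge>N. (j, a) \<in> S"
  shows "block_patterns k n \<subseteq> block_pattern ` nsubsets S n"
proof
  fix s assume "s \<in> block_patterns k n"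
  then have s: "set s \<subseteq> {..<k}" "length s = n"
    unfolding block_patterns_def by auto
  then obtain ys where ys: "length ys = n" "sorted_wrt (<) ys" "set (zip s ys) \<subseteq> S"
    using sorted_positions_in_blocks[where k = k and S = S and s = s and N = 0, OF assms] s
    by auto
  have "set (zip s ys) \<in> nsubsets S n"
    using set_zip_in_nsubsets[of ys s S] ys s by (simp add: strict_sorted_iff)
  moreover have "block_pattern (set (zip s ys)) = s"
    using ys s by (simp add: block_pattern_zip)
  ultimately show "s \<in> block_pattern ` nsubsets S n"
    by force
qed

lemma omega_embedding_tail_block:
  assumes into: "g ` omega_times k \<subseteq> omega_times k"
    and mono: "monotone_on (omega_times k) omega_less omega_less g"
    and "i < k"
  shows "\<exists>b. (\<forall>a. fst (g (i, a)) \<le> b) \<and> (\<forall>N. \<exists>a. fst (g (i, a)) = b \<and> N \<le> snd (g (i, a)))"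
proof -
  have in_omega: "(i, a) \<in> omega_times k" for a
    using \<open>i < k\<close> by (simp add: omega_times_def)
  have less_k: "fst (g (i, a)) < k" for a
  proof -
    have "g (i, a) \<in> omega_times k"
      using into in_omega[of a] by blast
    then show ?thesis
      by (simp add: mem_omega_times_iff)
  qed
  have g_less: "omega_less (g (i, a)) (g (i, a'))" if "a < a'" for a a'
    by (rule monotone_onD[OF mono in_omega in_omega]) (simp add: omega_less_def that)
  define b where "b = Max (range (\<lambda>a. fst (g (i, a))))"
  have fin: "finite (range (\<lambda>a. fst (g (i, a))))"
    by (rule finite_subset[of _ "{..<k}"]) (use less_k in auto)
  have le_b: "fst (g (i, a)) \<le> b" for a
    unfolding b_def using fin by simp
  obtain a0 where a0: "fst (g (i, a0)) = b"
    using Max_in[OF fin] unfolding b_def by auto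
  have tail: "fst (g (i, a0 + m)) = b" for m
  proof (cases m)
    case (Suc m')
    then have "fst (g (i, a0)) \<le> fst (g (i, a0 + m))"
      using g_less[of a0 "a0 + m"] unfolding omega_less_def by auto
    then show ?thesis
      using a0 le_b[of "a0 + m"] by simp
  qed (simp add: a0)
  have "strict_mono (\<lambda>m. snd (g (i, a0 + m)))"
    unfolding strict_mono_Suc_iff
  proof
    fix m
    show "snd (g (i, a0 + m)) < snd (g (i, a0 + Suc m))"
      using g_less[of "a0 + m" "a0 + Suc m"] tail[of m] tail[of "Suc m"]
      unfolding omega_less_def by simp
  qed
  then have "N \<le> snd (g (i, a0 + N))" for N
    by (rule strict_mono_imp_increasing)
  then show ?thesis
    using tail le_b by blast
qed

text \<open>The blocks in which the images of the blocks eventually settle strictly increase,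
  and there are only \<open>k\<close> of them.\<close>
lemma omega_embedding_cofinal_in_block:
  assumes into: "g ` omega_times k \<subseteq> omega_times k"
    and mono: "monotone_on (omega_times k) omega_less omega_less g"
    and "j < k"
  shows "\<exists>a. fst (g (j, a)) = j \<and> N \<le> snd (g (j, a))"
proof -
  have "\<forall>i\<in>{..<k}. \<exists>b. (\<forall>a. fst (g (i, a)) \<le> b) \<and>
      (\<forall>N. \<exists>a. fst (g (i, a)) = b \<and> N \<le> snd (g (i, a)))"
    using omega_embedding_tail_block[OF into mono] by blast
  from bchoice[OF this] obtain \<beta> where "\<forall>i\<in>{..<k}. (\<forall>a. fst (g (i, a)) \<le> \<beta> i) \<and>
      (\<forall>N. \<exists>a. fst (g (i, a)) = \<beta> i \<and> N \<le> snd (g (i, a)))"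
    by blast
  then have \<beta>_ge: "\<And>i a. i < k \<Longrightarrow> fst (g (i, a)) \<le> \<beta> i"
    and \<beta>_tail: "\<And>i N. i < k \<Longrightarrow> \<exists>a. fst (g (i, a)) = \<beta> i \<and> N \<le> snd (g (i, a))"
    by auto
  have in_omega: "(i, a) \<in> omega_times k" if "i < k" for i a
    using that by (simp add: omega_times_def)
  have "\<beta> i < \<beta> (Suc i)" if succ: "Suc i < k" for i
  proof -
    define v where "v = g (Suc i, 0)"
    obtain a where a: "fst (g (i, a)) = \<beta> i" "snd v \<le> snd (g (i, a))"
      using \<beta>_tail[of i "snd v"] Suc_lessD[OF succ] by blast
    have "omega_less (g (i, a)) v"
      unfolding v_def using Suc_lessD[OF succ] succ
      by (intro monotone_onD[OF mono in_omega in_omega]) (auto simp: omega_less_def)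
    then have "\<beta> i < fst v"
      using a unfolding omega_less_def by auto
    also have "fst v \<le> \<beta> (Suc i)"
      unfolding v_def using \<beta>_ge succ .
    finally show ?thesis .
  qed
  moreover have "\<beta> i < k" if i: "i < k" for i
  proof -
    obtain a where "fst (g (i, a)) = \<beta> i"
      using \<beta>_tail[OF i] by blast
    moreover have "g (i, a) \<in> omega_times k"
      using into in_omega[OF i, of a] by blast
    ultimately show ?thesis
      by (simp add: mem_omega_times_iff)
  qed
  ultimately have "\<beta> j = j"
    using \<open>j < k\<close> by (rule increasing_below_eq_id)
  then show ?thesis
    using \<beta>_tail[OF \<open>j < k\<close>] by simp
qed

lemma order_equiv_omega_times_block_unbounded:
  assumes "S \<subseteq> omega_times k" and "order_equiv omega_less S (omega_times k)" and "j < k"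
  shows "\<exists>a\<ge>N. (j, a) \<in> S"
proof -
  obtain g where g: "bij_betw g (omega_times k) S"
    and iff: "\<forall>x\<in>omega_times k. \<forall>y\<in>omega_times k. omega_less x y \<longleftrightarrow> omega_less (g x) (g y)"
    using order_equiv_sym[OF assms(2)] unfolding order_equiv_def by blast
  have into: "g ` omega_times k \<subseteq> omega_times k"
    using g assms(1) by (simp add: bij_betw_def)
  have mono: "monotone_on (omega_times k) omega_less omega_less g"
    using iff by (simp add: monotone_on_def)
  obtain a where a: "fst (g (j, a)) = j" "N \<le> snd (g (j, a))"
    using omega_embedding_cofinal_in_block[OF into mono assms(3), of N] by blast
  have "g (j, a) \<in> S"
    using g assms(3) by (auto simp: bij_betw_def omega_times_def)
  then show ?thesis
    using a by (intro exI[of _ "snd (g (j, a))"]) (metis prod.collapse)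
qed

lemma inj_on_omega_times_position: "inj_on (\<lambda>x. k * snd x + fst x) (omega_times k)"
proof (rule inj_onI)
  fix x y assume "x \<in> omega_times k" "y \<in> omega_times k"
    and eq: "k * snd x + fst x = k * snd y + fst y"
  then have "fst x < k" "fst y < k"
    by (simp_all add: mem_omega_times_iff)
  then have "(k * snd x + fst x) mod k = fst x" "(k * snd y + fst y) mod k = fst y"
    by simp_all
  then have "fst x = fst y"
    using eq by metis
  moreover from this have "snd x = snd y"
    using eq \<open>fst x < k\<close> by simp
  ultimately show "x = y"
    by (simp add: prod_eq_iff)
qed

lemma omega_times_copy_in:
  fixes H :: "nat set"
  assumes "infinite H"
  obtains S where "S \<subseteq> omega_times k" "order_equiv omega_less S (omega_times k)"
    "inj_on snd S" "snd ` S \<subseteq> H"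
proof -
  define h where "h = enumerate H"
  have h_less: "h x < h y \<longleftrightarrow> x < y" for x y
    unfolding h_def using assms by simp
  then have "strict_mono h"
    by (simp add: strict_mono_def)
  then have h_inj: "inj h"
    by (rule strict_mono_imp_inj_on)
  define pos where "pos x = k * snd x + fst x" for x :: "nat \<times> nat"
  have pos_inj: "inj_on pos (omega_times k)"
    unfolding pos_def by (rule inj_on_omega_times_position)
  define \<phi> where "\<phi> x = (fst x, h (pos x))" for x
  txt \<open>\<open>\<omega>\<cdot>b + i\<close> goes to \<open>\<omega>\<cdot>b + h (k\<cdot>i + b)\<close>: the \<open>k\<close> blocks interleave along \<open>H\<close>,
    so distinct points of the copy have distinct positions.\<close>
  have "snd \<circ> \<phi> = h \<circ> pos"
    by (simp add: \<phi>_def fun_eq_iff)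
  then have snd_\<phi>_inj: "inj_on (snd \<circ> \<phi>) (omega_times k)"
    using comp_inj_on[OF pos_inj inj_on_subset[OF h_inj subset_UNIV]] by simp
  let ?S = "\<phi> ` omega_times k"
  have "bij_betw \<phi> (omega_times k) ?S"
    using inj_on_imageI2[OF snd_\<phi>_inj] by (rule inj_on_imp_bij_betw)
  moreover have "omega_less x y \<longleftrightarrow> omega_less (\<phi> x) (\<phi> y)"
    if "x \<in> omega_times k" "y \<in> omega_times k" for x y
    using that by (auto simp: omega_less_def \<phi>_def pos_def h_less mem_omega_times_iff)
  ultimately have "order_equiv omega_less (omega_times k) ?S"
    unfolding order_equiv_def by blast
  then have "order_equiv omega_less ?S (omega_times k)"
    by (rule order_equiv_sym)
  moreover have "?S \<subseteq> omega_times k"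
    by (auto simp: \<phi>_def mem_omega_times_iff)
  moreover have "inj_on snd ?S"
    using snd_\<phi>_inj by (rule inj_on_imageI)
  moreover have "snd ` ?S \<subseteq> H"
    unfolding \<phi>_def h_def using enumerate_in_set[OF assms] by auto
  ultimately show thesis
    using that by blast
qed

lemma T_bound_omega_times: "T_bound n (omega_times k) omega_less (k ^ n)"
  unfolding T_bound_def
proof (intro allI impI)
  fix c :: nat and COL :: "(nat \<times> nat) set \<Rightarrow> nat"
  assume COL: "\<forall>X\<in>nsubsets (omega_times k) n. COL X \<in> {1..c}"
  define colour where "colour s Y = COL (set (zip s (sorted_list_of_set Y)))" for s Y
  have "colour s ` [UNIV]\<^bsup>n\<^esup> \<subseteq> {..<Suc c}" if "s \<in> block_patterns k n" for s
    using COL set_zip_pattern_in_nsubsets[OF that] by (fastforce simp: colour_def nsets_def)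
  then obtain H t where "H \<subseteq> UNIV" and H: "infinite H"
    and homogeneous: "\<forall>s\<in>block_patterns k n. colour s ` [H]\<^bsup>n\<^esup> \<subseteq> {t s}"
    by (rule Ramsey_nsets_finite_family[OF finite_block_patterns infinite_UNIV_nat])
  obtain S where S: "S \<subseteq> omega_times k" "order_equiv omega_less S (omega_times k)"
    "inj_on snd S" "snd ` S \<subseteq> H"
    using H by (rule omega_times_copy_in)
  have "COL X = t (block_pattern X)" if "X \<in> nsubsets S n" for X
  proof -
    note decomposition = block_pattern_decomposition[OF S(1,3) that]
    have "snd ` X \<in> [H]\<^bsup>n\<^esup>"
      using decomposition(2) nsets_mono[OF S(4)] by blast
    then have "colour (block_pattern X) (snd ` X) = t (block_pattern X)"
      using homogeneous decomposition(1) by blast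
    then show ?thesis
      unfolding colour_def decomposition(3) .
  qed
  then have "COL ` nsubsets S n \<subseteq> t ` block_patterns k n"
    using block_pattern_decomposition(1)[OF S(1,3)] by blast
  then have "card (COL ` nsubsets S n) \<le> card (t ` block_patterns k n)"
    by (intro card_mono finite_imageI finite_block_patterns)
  also have "\<dots> \<le> k ^ n"
    using card_image_le[OF finite_block_patterns, of t] by (simp add: card_block_patterns)
  finally show "\<exists>S'. S' \<subseteq> omega_times k \<and> order_equiv omega_less S' (omega_times k) \<and>
      card (COL ` nsubsets S' n) \<le> k ^ n"
    using S(1,2) by blast
qed

lemma T_bound_omega_times_ge:
  assumes "T_bound n (omega_times k) omega_less t"
  shows "k ^ n \<le> t"
proof -
  let ?COL = "\<lambda>X. to_nat (block_pattern X)"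
  have "finite (?COL ` nsubsets (omega_times k) n)"
    using finite_imageI[OF finite_block_pattern_image, of to_nat] by (simp add: image_image)
  then obtain S where S: "S \<subseteq> omega_times k" "order_equiv omega_less S (omega_times k)"
      "card (?COL ` nsubsets S n) \<le> t"
    by (rule T_bound_finite_colouring[OF assms])
  have "block_patterns k n \<subseteq> block_pattern ` nsubsets S n"
    using order_equiv_omega_times_block_unbounded[OF S(1,2)] by (rule block_patterns_subset_image)
  moreover have "block_pattern ` nsubsets S n \<subseteq> block_pattern ` nsubsets (omega_times k) n"
    using S(1) by (auto simp: nsubsets_def)
  ultimately have "k ^ n \<le> card (block_pattern ` nsubsets S n)"
    using card_mono[OF finite_subset] finite_block_pattern_image by (metis card_block_patterns)
  also have "\<dots> = card (to_nat ` block_pattern ` nsubsets S n)"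
    by (rule card_image[symmetric]) (simp add: inj_on_def)
  also have "\<dots> = card (?COL ` nsubsets S n)"
    by (simp add: image_image)
  also have "\<dots> \<le> t"
    by (rule S(3))
  finally show ?thesis .
qed

theorem theorem5p2:
  fixes n k :: nat
  shows "T n (omega_times k) omega_less \<ge> enat (k ^ n) \<and>
         T n (omega_times k) omega_less = enat (k ^ n)"
proof -
  have "T n (omega_times k) omega_less = enat (k ^ n)"
    using T_bound_omega_times T_bound_omega_times_ge by (rule T_eqI)
  then show ?thesis
    by simp
qed

end
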